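(* Let $\pi_1:V_1\to X_1$ and $\pi_2:V_2\to X_2$ be diffeological vector pseudo-bundles, let $(\tilde f,f)$ be a gluing of the former to the latter such that both $\tilde f$ and $f$ are subductions (onto their images), and let $s_i\in C^\infty(X_i,V_i)$ for $i=1,2$. If $s_1$ and $s_2$ are $(f,\tilde f)$-compatible, then $\mathcal{S}_1(s_1)$ and $s_2$ are $(f_\sim,\tilde f_\sim)$-compatible.
   Context: Diffeological spaces, smooth maps, subset/quotient diffeologies and subductions (smooth surjections with pushforward diffeology on the target) are as usual. A diffeological vector pseudo-bundle $\pi:V\to X$ is a smooth surjection with vector space fibres whose fibrewise addition, scalar multiplication and zero section are smooth. A gluing $(\tilde f,f)$: $f:Y\to X_2$ smooth on $Y\subseteq X_1$, $\tilde f:\pi_1^{-1}(Y)\to V_2$ smooth, $\pi_2\circ\tilde f=f\circ\pi_1$, linear on fibres. $s_1,s_2$ are $(f,\tilde f)$-compatible if $\tilde f(s_1(y))=s_2(f(y))$ for all $y\in Y$ (then $s_1$ is $(f,\tilde f)$-invariant: $\tilde f(s_1(y))=\tilde f(s_1(y'))$ whenever $f(y)=f(y')$). $X_1^f$ is the quotient of $X_1$ identifying $y,y'\in Y$ with $f(y)=f(y')$, $V_1^{\tilde f}$ the quotient of $V_1$ identifying $v,v'\in\pi_1^{-1}(Y)$ with $\tilde f(v)=\tilde f(v')$ (quotient diffeologies, projections $\chi_1^f,\chi_1^{\tilde f}$); $f,\tilde f$ induce $f_\sim:\chi_1^f(Y)\to X_2$ and $\tilde f_\sim:\chi_1^{\tilde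 f}(\pi_1^{-1}(Y))\to V_2$ with $f_\sim\circ\chi_1^f=f$, $\tilde f_\sim\circ\chi_1^{\tilde f}=\tilde f$. For an $(f,\tilde f)$-invariant $s_1$, $\mathcal{S}_1(s_1)$ is the unique smooth section of $V_1^{\tilde f}\to X_1^f$ with $\mathcal{S}_1(s_1)\circ\chi_1^f=\chi_1^{\tilde f}\circ s_1$. A section $\sigma$ of $V_1^{\tilde f}$ and $s_2$ are $(f_\sim,\tilde f_\sim)$-compatible if $\tilde f_\sim(\sigma(z))=s_2(f_\sim(z))$ for all $z\in\chi_1^f(Y)$. *)

theory Defs
  imports "HOL-Analysis.Analysis"
begin

section \<open>Euclidean domains R^n (as functions nat => real vanishing from index n on)\<close>

type_synonym rn = "nat \<Rightarrow> real"

text \<open>A plot is a triple (n, U, p): U an open subset of R^n and p : U -> X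
  (values of p outside U are irrelevant).\<close>
type_synonym 'a plot = "nat \<times> rn set \<times> (rn \<Rightarrow> 'a)"
type_synonym 'a diffeology = "'a plot set"

definition euclid :: "nat \<Rightarrow> rn set" where
  "euclid n = {x. \<forall>i\<ge>n. x i = 0}"

definition edist :: "nat \<Rightarrow> rn \<Rightarrow> rn \<Rightarrow> real" where
  "edist n x y = sqrt (\<Sum>i<n. (x i - y i)^2)"

definition eopen :: "nat \<Rightarrow> rn set \<Rightarrow> bool" where
  "eopen n U \<longleftrightarrow> U \<subseteq> euclid n \<and>
     (\<forall>x\<in>U. \<exists>e>0. \<forall>y\<in>euclid n. edist n x y < e \<longrightarrow> y \<in> U)"

definition econt :: "nat \<Rightarrow> rn set \<Rightarrow> (rn \<Rightarrow> real) \<Rightarrow> bool" where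
  "econt n U g \<longleftrightarrow>
     (\<forall>x\<in>U. \<forall>e>0. \<exists>d>0. \<forall>y\<in>U. edist n x y < d \<longrightarrow> \<bar>g y - g x\<bar> < e)"

definition has_partial :: "(rn \<Rightarrow> real) \<Rightarrow> nat \<Rightarrow> rn \<Rightarrow> real \<Rightarrow> bool" where
  "has_partial g i x d \<longleftrightarrow> ((\<lambda>t. g (x(i := x i + t))) has_real_derivative d) (at 0)"

coinductive cinf :: "nat \<Rightarrow> rn set \<Rightarrow> (rn \<Rightarrow> real) \<Rightarrow> bool" for n U where
  "econt n U g \<Longrightarrow> (\<forall>i<n. \<exists>h. (\<forall>x\<in>U. has_partial g i x (h x)) \<and> cinf n U h)
     \<Longrightarrow> cinf n U g"

definition smooth_euclid :: "nat \<Rightarrow> rn set \<Rightarrow> nat \<Rightarrow> (rn \<Rightarrow> rn) \<Rightarrow> bool" where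
  "smooth_euclid n U m h \<longleftrightarrow> (\<forall>x\<in>U. h x \<in> euclid m) \<and> (\<forall>j<m. cinf n U (\<lambda>x. h x j))"

definition diffeology :: "'a set \<Rightarrow> 'a diffeology \<Rightarrow> bool" where
  "diffeology X D \<longleftrightarrow>
     (\<forall>(n, U, p)\<in>D. eopen n U \<and> p ` U \<subseteq> X) \<and>
     (\<forall>n U p q. (n, U, p) \<in> D \<and> (\<forall>u\<in>U. q u = p u) \<longrightarrow> (n, U, q) \<in> D) \<and>
     (\<forall>n U x. eopen n U \<and> x \<in> X \<longrightarrow> (n, U, \<lambda>_. x) \<in> D) \<and>
     (\<forall>n U p m V h. (n, U, p) \<in> D \<and> eopen m V \<and> smooth_euclid m V n h \<and> h ` V \<subseteq> U
        \<longrightarrow> (m, V, p \<circ> h) \<in> D) \<and>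
     (\<forall>n U p. eopen n U \<and> p ` U \<subseteq> X \<and>
        (\<forall>u\<in>U. \<exists>W. eopen n W \<and> u \<in> W \<and> W \<subseteq> U \<and> (n, W, p) \<in> D)
        \<longrightarrow> (n, U, p) \<in> D)"

definition dsmooth :: "'a set \<Rightarrow> 'a diffeology \<Rightarrow> 'b set \<Rightarrow> 'b diffeology \<Rightarrow> ('a \<Rightarrow> 'b) \<Rightarrow> bool" where
  "dsmooth X DX Y DY f \<longleftrightarrow> f ` X \<subseteq> Y \<and> (\<forall>(n, U, p)\<in>DX. (n, U, f \<circ> p) \<in> DY)"

definition subset_diff :: "'a set \<Rightarrow> 'a diffeology \<Rightarrow> 'a diffeology" where
  "subset_diff A D = {(n, U, p). (n, U, p) \<in> D \<and> p ` U \<subseteq> A}"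

definition prod_diff :: "'a diffeology \<Rightarrow> 'b diffeology \<Rightarrow> ('a \<times> 'b) diffeology" where
  "prod_diff DA DB = {(n, U, p). (n, U, fst \<circ> p) \<in> DA \<and> (n, U, snd \<circ> p) \<in> DB}"

definition real_diff :: "real diffeology" where
  "real_diff = {(n, U, g). eopen n U \<and> cinf n U g}"

definition pushforward_diff :: "'a diffeology \<Rightarrow> 'b set \<Rightarrow> ('a \<Rightarrow> 'b) \<Rightarrow> 'b diffeology" where
  "pushforward_diff D Y f = {(n, U, q). eopen n U \<and> q ` U \<subseteq> Y \<and>
     (\<forall>u\<in>U. \<exists>W p. eopen n W \<and> u \<in> W \<and> W \<subseteq> U \<and> (n, W, p) \<in> D \<and>
        (\<forall>w\<in>W. q w = f (p w)))}"

definition subduction :: "'a set \<Rightarrow> 'a diffeology \<Rightarrow> 'b set \<Rightarrow> 'b diffeology \<Rightarrow> ('a \<Rightarrow> 'b) \<Rightarrow> bool" where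
  "subduction X DX Y DY f \<longleftrightarrow>
     dsmooth X DX Y DY f \<and> f ` X = Y \<and> DY = pushforward_diff DX Y f"

definition fibre_vs :: "'v set \<Rightarrow> ('v \<Rightarrow> 'v \<Rightarrow> 'v) \<Rightarrow> (real \<Rightarrow> 'v \<Rightarrow> 'v) \<Rightarrow> 'v \<Rightarrow> bool" where
  "fibre_vs F add smul z \<longleftrightarrow>
     z \<in> F \<and> (\<forall>v\<in>F. \<forall>w\<in>F. add v w \<in> F) \<and> (\<forall>c. \<forall>v\<in>F. smul c v \<in> F) \<and>
     (\<forall>u\<in>F. \<forall>v\<in>F. \<forall>w\<in>F. add (add u v) w = add u (add v w)) \<and>
     (\<forall>v\<in>F. \<forall>w\<in>F. add v w = add w v) \<and>
     (\<forall>v\<in>F. add v z = v) \<and>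
     (\<forall>v\<in>F. add v (smul (-1) v) = z) \<and>
     (\<forall>a. \<forall>v\<in>F. \<forall>w\<in>F. smul a (add v w) = add (smul a v) (smul a w)) \<and>
     (\<forall>a b. \<forall>v\<in>F. smul (a + b) v = add (smul a v) (smul b v)) \<and>
     (\<forall>a b. \<forall>v\<in>F. smul a (smul b v) = smul (a * b) v) \<and>
     (\<forall>v\<in>F. smul 1 v = v)"

definition fibred_pairs :: "'v set \<Rightarrow> ('v \<Rightarrow> 'x) \<Rightarrow> ('v \<times> 'v) set" where
  "fibred_pairs V \<pi> = {(v, w). v \<in> V \<and> w \<in> V \<and> \<pi> v = \<pi> w}"

definition vpb :: "'v set \<Rightarrow> 'v diffeology \<Rightarrow> 'x set \<Rightarrow> 'x diffeology \<Rightarrow> ('v \<Rightarrow> 'x)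
    \<Rightarrow> ('v \<Rightarrow> 'v \<Rightarrow> 'v) \<Rightarrow> (real \<Rightarrow> 'v \<Rightarrow> 'v) \<Rightarrow> ('x \<Rightarrow> 'v) \<Rightarrow> bool" where
  "vpb V DV X DX \<pi> add smul zero \<longleftrightarrow>
     diffeology V DV \<and> diffeology X DX \<and>
     dsmooth V DV X DX \<pi> \<and> \<pi> ` V = X \<and>
     (\<forall>x\<in>X. fibre_vs {v\<in>V. \<pi> v = x} add smul (zero x)) \<and>
     dsmooth (fibred_pairs V \<pi>) (subset_diff (fibred_pairs V \<pi>) (prod_diff DV DV)) V DV
       (\<lambda>(v, w). add v w) \<and>
     dsmooth (UNIV \<times> V) (prod_diff real_diff DV) V DV (\<lambda>(c, v). smul c v) \<and>
     dsmooth X DX V DV zero"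

definition bpreim :: "'v set \<Rightarrow> ('v \<Rightarrow> 'x) \<Rightarrow> 'x set \<Rightarrow> 'v set" where
  "bpreim V \<pi> Y = {v \<in> V. \<pi> v \<in> Y}"

definition smooth_section :: "'v set \<Rightarrow> 'v diffeology \<Rightarrow> 'x set \<Rightarrow> 'x diffeology \<Rightarrow> ('v \<Rightarrow> 'x)
    \<Rightarrow> ('x \<Rightarrow> 'v) \<Rightarrow> bool" where
  "smooth_section V DV X DX \<pi> s \<longleftrightarrow> dsmooth X DX V DV s \<and> (\<forall>x\<in>X. \<pi> (s x) = x)"

definition gluing :: "'v1 set \<Rightarrow> 'v1 diffeology \<Rightarrow> 'x1 set \<Rightarrow> 'x1 diffeology \<Rightarrow> ('v1 \<Rightarrow> 'x1)
    \<Rightarrow> ('v1 \<Rightarrow> 'v1 \<Rightarrow> 'v1) \<Rightarrow> (real \<Rightarrow> 'v1 \<Rightarrow> 'v1)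
    \<Rightarrow> 'v2 set \<Rightarrow> 'v2 diffeology \<Rightarrow> 'x2 set \<Rightarrow> 'x2 diffeology \<Rightarrow> ('v2 \<Rightarrow> 'x2)
    \<Rightarrow> ('v2 \<Rightarrow> 'v2 \<Rightarrow> 'v2) \<Rightarrow> (real \<Rightarrow> 'v2 \<Rightarrow> 'v2)
    \<Rightarrow> 'x1 set \<Rightarrow> ('x1 \<Rightarrow> 'x2) \<Rightarrow> ('v1 \<Rightarrow> 'v2) \<Rightarrow> bool" where
  "gluing V1 DV1 X1 DX1 \<pi>1 add1 smul1 V2 DV2 X2 DX2 \<pi>2 add2 smul2 Y f ft \<longleftrightarrow>
     Y \<subseteq> X1 \<and>
     dsmooth Y (subset_diff Y DX1) X2 DX2 f \<and>
     dsmooth (bpreim V1 \<pi>1 Y) (subset_diff (bpreim V1 \<pi>1 Y) DV1) V2 DV2 ft \<and>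
     (\<forall>v\<in>bpreim V1 \<pi>1 Y. \<pi>2 (ft v) = f (\<pi>1 v)) \<and>
     (\<forall>v\<in>bpreim V1 \<pi>1 Y. \<forall>w\<in>bpreim V1 \<pi>1 Y. \<pi>1 v = \<pi>1 w \<longrightarrow>
        ft (add1 v w) = add2 (ft v) (ft w)) \<and>
     (\<forall>c. \<forall>v\<in>bpreim V1 \<pi>1 Y. ft (smul1 c v) = smul2 c (ft v))"

definition compatible :: "'x1 set \<Rightarrow> ('x1 \<Rightarrow> 'x2) \<Rightarrow> ('v1 \<Rightarrow> 'v2) \<Rightarrow> ('x1 \<Rightarrow> 'v1) \<Rightarrow> ('x2 \<Rightarrow> 'v2) \<Rightarrow> bool" where
  "compatible Y f ft s1 s2 \<longleftrightarrow> (\<forall>y\<in>Y. ft (s1 y) = s2 (f y))"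

definition glue_rel :: "'a set \<Rightarrow> 'a set \<Rightarrow> ('a \<Rightarrow> 'b) \<Rightarrow> 'a rel" where
  "glue_rel A B g = {(a, a'). a \<in> A \<and> a' \<in> A \<and> (a = a' \<or> (a \<in> B \<and> a' \<in> B \<and> g a = g a'))}"

definition glue_quot :: "'a set \<Rightarrow> 'a set \<Rightarrow> ('a \<Rightarrow> 'b) \<Rightarrow> 'a set set" where
  "glue_quot A B g = A // glue_rel A B g"

definition glue_proj :: "'a set \<Rightarrow> 'a set \<Rightarrow> ('a \<Rightarrow> 'b) \<Rightarrow> 'a \<Rightarrow> 'a set" where
  "glue_proj A B g a = glue_rel A B g `` {a}"

definition quot_diff :: "'a set \<Rightarrow> 'a diffeology \<Rightarrow> 'a set \<Rightarrow> ('a \<Rightarrow> 'b) \<Rightarrow> 'a set diffeology" where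
  "quot_diff A D B g = pushforward_diff D (glue_quot A B g) (glue_proj A B g)"

definition induced_map :: "'a set \<Rightarrow> 'a set \<Rightarrow> ('a \<Rightarrow> 'b) \<Rightarrow> 'a set \<Rightarrow> 'b" where
  "induced_map A B g = (THE h. (\<forall>b\<in>B. h (glue_proj A B g b) = g b) \<and>
      (\<forall>z. z \<notin> glue_proj A B g ` B \<longrightarrow> h z = undefined))"

definition S1 :: "'x1 set \<Rightarrow> 'x1 set \<Rightarrow> ('x1 \<Rightarrow> 'x2) \<Rightarrow> 'v1 set \<Rightarrow> ('v1 \<Rightarrow> 'x1) \<Rightarrow> ('v1 \<Rightarrow> 'v2)
    \<Rightarrow> ('x1 \<Rightarrow> 'v1) \<Rightarrow> 'x1 set \<Rightarrow> 'v1 set" where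
  "S1 X1 Y f V1 \<pi>1 ft s1 = (THE \<sigma>.
      (\<forall>x\<in>X1. \<sigma> (glue_proj X1 Y f x) = glue_proj V1 (bpreim V1 \<pi>1 Y) ft (s1 x)) \<and>
      (\<forall>z. z \<notin> glue_quot X1 Y f \<longrightarrow> \<sigma> z = undefined))"

end

theory Submission
  imports Defs
begin

text \<open>For y \<in> Y the induced maps evaluate on classes as f~(\<chi>(y)) = f(y),
  S1(s1)(\<chi>(y)) = \<chi>(s1(y)) and ft~(\<chi>(s1(y))) = ft(s1(y)), so compatibility of S1(s1)
  with s2 at \<chi>(y) is compatibility of s1 with s2 at y. The only point is that S1(s1) is
  well defined, i.e. s1 is invariant, and this follows from compatibility. The subduction
  hypotheses matter only for smoothness of the induced maps, not for this identity.\<close>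

lemma the_factor_apply:
  assumes respects: "\<And>a a'. a \<in> A \<Longrightarrow> a' \<in> A \<Longrightarrow> p a = p a' \<Longrightarrow> g a = g a'"
    and a: "a \<in> A"
  shows "(THE h. (\<forall>a\<in>A. h (p a) = g a) \<and> (\<forall>z. z \<notin> p ` A \<longrightarrow> h z = undefined)) (p a) = g a"
proof -
  let ?P = "\<lambda>h. (\<forall>a\<in>A. h (p a) = g a) \<and> (\<forall>z. z \<notin> p ` A \<longrightarrow> h z = undefined)"
  define h0 where "h0 z = (if z \<in> p ` A then g (inv_into A p z) else undefined)" for z
  have "h0 (p a) = g a" if "a \<in> A" for a
  proof -
    have "inv_into A p (p a) \<in> A" "p (inv_into A p (p a)) = p a"
      using that by (auto intro: inv_into_into f_inv_into_f)
    then have "g (inv_into A p (p a)) = g a"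
      using respects that by blast
    then show ?thesis
      using that by (simp add: h0_def)
  qed
  then have "?P h0"
    by (auto simp: h0_def)
  moreover have "h = h0" if "?P h" for h
  proof
    fix z
    show "h z = h0 z"
      by (cases "z \<in> p ` A") (use that \<open>?P h0\<close> in auto)
  qed
  ultimately have "(THE h. ?P h) = h0"
    by (rule the_equality)
  then show ?thesis
    using \<open>?P h0\<close> a by simp
qed

lemma glue_quot_eq_image: "glue_quot A B g = glue_proj A B g ` A"
  unfolding glue_quot_def glue_proj_def quotient_def by blast

lemma glue_proj_eqD:
  assumes "a' \<in> A" "glue_proj A B g a = glue_proj A B g a'"
  shows "a = a' \<or> (a \<in> B \<and> a' \<in> B \<and> g a = g a')"
proof -
  have "a' \<in> glue_proj A B g a"
    using assms by (simp add: glue_proj_def glue_rel_def)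
  then show ?thesis
    by (auto simp: glue_proj_def glue_rel_def)
qed

lemma glue_proj_eqI:
  assumes "B \<subseteq> A" "a \<in> B" "a' \<in> B" "g a = g a'"
  shows "glue_proj A B g a = glue_proj A B g a'"
  using assms by (auto simp: glue_proj_def glue_rel_def)

lemma induced_map_glue_proj:
  assumes "B \<subseteq> A" "b \<in> B"
  shows "induced_map A B g (glue_proj A B g b) = g b"
  unfolding induced_map_def
  using assms by (intro the_factor_apply) (auto dest: glue_proj_eqD)

lemma S1_glue_proj:
  assumes "\<And>x x'. x \<in> X1 \<Longrightarrow> x' \<in> X1 \<Longrightarrow> glue_proj X1 Y f x = glue_proj X1 Y f x' \<Longrightarrow>
      glue_proj V1 (bpreim V1 \<pi>1 Y) ft (s1 x) = glue_proj V1 (bpreim V1 \<pi>1 Y) ft (s1 x')"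
    and "x \<in> X1"
  shows "S1 X1 Y f V1 \<pi>1 ft s1 (glue_proj X1 Y f x) = glue_proj V1 (bpreim V1 \<pi>1 Y) ft (s1 x)"
  unfolding S1_def glue_quot_eq_image
  using assms by (rule the_factor_apply)

lemma compatible_imp_glue_invariant:
  assumes "Y \<subseteq> X1" "smooth_section V1 DV1 X1 DX1 \<pi>1 s1" "compatible Y f ft s1 s2"
    and "x \<in> X1" "x' \<in> X1" "glue_proj X1 Y f x = glue_proj X1 Y f x'"
  shows "glue_proj V1 (bpreim V1 \<pi>1 Y) ft (s1 x) = glue_proj V1 (bpreim V1 \<pi>1 Y) ft (s1 x')"
proof -
  have s1_bpreim: "s1 y \<in> bpreim V1 \<pi>1 Y" if "y \<in> Y" for y
    using assms(1,2) that by (auto simp: smooth_section_def dsmooth_def bpreim_def)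
  have "bpreim V1 \<pi>1 Y \<subseteq> V1"
    by (auto simp: bpreim_def)
  from glue_proj_eqD[OF assms(5,6)] show ?thesis
  proof
    assume "x \<in> Y \<and> x' \<in> Y \<and> f x = f x'"
    then show ?thesis
      using assms(3) s1_bpreim \<open>bpreim V1 \<pi>1 Y \<subseteq> V1\<close>
      by (intro glue_proj_eqI) (auto simp: compatible_def)
  qed simp
qed

theorem proposition2p26:
  fixes V1 :: "'v1 set" and DV1 :: "'v1 diffeology" and X1 :: "'x1 set" and DX1 :: "'x1 diffeology"
    and \<pi>1 :: "'v1 \<Rightarrow> 'x1" and add1 :: "'v1 \<Rightarrow> 'v1 \<Rightarrow> 'v1" and smul1 :: "real \<Rightarrow> 'v1 \<Rightarrow> 'v1"
    and zero1 :: "'x1 \<Rightarrow> 'v1"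
    and V2 :: "'v2 set" and DV2 :: "'v2 diffeology" and X2 :: "'x2 set" and DX2 :: "'x2 diffeology"
    and \<pi>2 :: "'v2 \<Rightarrow> 'x2" and add2 :: "'v2 \<Rightarrow> 'v2 \<Rightarrow> 'v2" and smul2 :: "real \<Rightarrow> 'v2 \<Rightarrow> 'v2"
    and zero2 :: "'x2 \<Rightarrow> 'v2"
    and Y :: "'x1 set" and f :: "'x1 \<Rightarrow> 'x2" and ft :: "'v1 \<Rightarrow> 'v2"
    and s1 :: "'x1 \<Rightarrow> 'v1" and s2 :: "'x2 \<Rightarrow> 'v2"
  assumes bundle1: "vpb V1 DV1 X1 DX1 \<pi>1 add1 smul1 zero1"
    and bundle2: "vpb V2 DV2 X2 DX2 \<pi>2 add2 smul2 zero2"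
    and glue: "gluing V1 DV1 X1 DX1 \<pi>1 add1 smul1 V2 DV2 X2 DX2 \<pi>2 add2 smul2 Y f ft"
    and f_subd: "subduction Y (subset_diff Y DX1) (f ` Y) (subset_diff (f ` Y) DX2) f"
    and ft_subd: "subduction (bpreim V1 \<pi>1 Y) (subset_diff (bpreim V1 \<pi>1 Y) DV1)
                    (ft ` bpreim V1 \<pi>1 Y) (subset_diff (ft ` bpreim V1 \<pi>1 Y) DV2) ft"
    and sec1: "smooth_section V1 DV1 X1 DX1 \<pi>1 s1"
    and sec2: "smooth_section V2 DV2 X2 DX2 \<pi>2 s2"
    and compat: "compatible Y f ft s1 s2"
  shows "compatible (glue_proj X1 Y f ` Y)
           (induced_map X1 Y f) (induced_map V1 (bpreim V1 \<pi>1 Y) ft)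
           (S1 X1 Y f V1 \<pi>1 ft s1) s2"
  unfolding compatible_def
proof
  fix z
  assume "z \<in> glue_proj X1 Y f ` Y"
  then obtain y where y: "y \<in> Y" and z: "z = glue_proj X1 Y f y" by blast
  have YX: "Y \<subseteq> X1"
    using glue by (simp add: gluing_def)
  have s1y: "s1 y \<in> bpreim V1 \<pi>1 Y"
    using sec1 y YX by (auto simp: smooth_section_def dsmooth_def bpreim_def)
  have "S1 X1 Y f V1 \<pi>1 ft s1 z = glue_proj V1 (bpreim V1 \<pi>1 Y) ft (s1 y)"
    unfolding z using y YX
    by (intro S1_glue_proj compatible_imp_glue_invariant[OF YX sec1 compat]) auto
  then have "induced_map V1 (bpreim V1 \<pi>1 Y) ft (S1 X1 Y f V1 \<pi>1 ft s1 z) = ft (s1 y)"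
    using s1y by (simp add: induced_map_glue_proj bpreim_def)
  moreover have "induced_map X1 Y f z = f y"
    unfolding z using YX y by (rule induced_map_glue_proj)
  ultimately show "induced_map V1 (bpreim V1 \<pi>1 Y) ft (S1 X1 Y f V1 \<pi>1 ft s1 z) =
      s2 (induced_map X1 Y f z)"
    using compat y by (simp add: compatible_def)
qed

end
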